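(* Let $R$ be an arbitrary unital associative ring and let $J=J_2\circ J_1$ act on $M_3(R)$. Then for every $M\in{\rm dom}(J^3)$ there exist invertible diagonal $3\times 3$ matrices $D_1,D_2$ over $R$ such that $J^3(M)=D_1^{-1}MD_2$.
   Context: $R^*$ denotes the group of units of $R$. $M_n^*(R)$ is the set of invertible $n\times n$ matrices over $R$ (usual product), and $M_n^\star(R)$ is the set of $n\times n$ matrices all of whose entries lie in $R^*$. $J_1(M)=M^{-1}$ with domain $M_n^*(R)$; $J_2(M)$ is the matrix with $(j,k)$-entry $(M_{kj})^{-1}$, with domain $M_n^\star(R)$. For maps $f,g$ the composition $g\circ f$ has domain $\{x\in{\rm dom}(f): f(x)\in{\rm dom}(g)\}$; $J^k$ is the $k$-fold composition of $J$ with this natural domain. *)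

theory Defs
  imports "HOL-Analysis.Analysis" "HOL-Library.Numeral_Type"
begin

definition is_unit :: "'a::ring_1 \<Rightarrow> bool" where
  "is_unit u \<longleftrightarrow> (\<exists>v. u * v = 1 \<and> v * u = 1)"

definition ring_inv :: "'a::ring_1 \<Rightarrow> 'a" where
  "ring_inv u = (THE v. u * v = 1 \<and> v * u = 1)"

text \<open>Partial maps are modelled as option-valued functions; None means
  "outside the domain".\<close>

definition J1 :: "'a::ring_1^'n^'n \<Rightarrow> ('a^'n^'n) option" where
  "J1 M = (if invertible M then Some (matrix_inv M) else None)"

definition J2 :: "'a::ring_1^'n^'n \<Rightarrow> ('a^'n^'n) option" where
  "J2 M = (if (\<forall>i j. is_unit (M $ i $ j))
           then Some (\<chi> j k. ring_inv (M $ k $ j)) else None)"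

definition J :: "'a::ring_1^'n^'n \<Rightarrow> ('a^'n^'n) option" where
  "J M = Option.bind (J1 M) J2"

fun J_pow :: "nat \<Rightarrow> 'a::ring_1^'n^'n \<Rightarrow> ('a^'n^'n) option" where
  "J_pow 0 M = Some M"
| "J_pow (Suc k) M = Option.bind (J_pow k M) J"

definition diagonal_mat :: "'a::zero^'n^'n \<Rightarrow> bool" where
  "diagonal_mat D \<longleftrightarrow> (\<forall>i j. i \<noteq> j \<longrightarrow> D $ i $ j = 0)"

end

theory Submission
  imports Defs
begin

text \<open>Write \<open>J A = H (A\<inverse>)\<close>, where \<open>H\<close> inverts every entry and transposes, and let
  \<open>M = A\<^sub>0, A\<^sub>1, A\<^sub>2, A\<^sub>3 = J\<^sup>3 M\<close> with \<open>N\<^sub>i = A\<^sub>i\<inverse>\<close>, so \<open>A\<^sub>i\<^sub>+\<^sub>1 = H N\<^sub>i\<close>.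
  If \<open>X, Z\<close> are mutually inverse \<open>3 \<times> 3\<close> matrices with unit entries and \<open>H Z \<cdot> P = 1\<close>,
  an explicit unit vector \<open>e\<close> built from \<open>2 \<times> 2\<close> Schur complements of \<open>Z\<close> makes
  \<open>H X \<cdot> diag e \<cdot> H P\<close> diagonal: each off-diagonal entry is a cyclic sum that telescopes.
  Applied to \<open>(A\<^sub>1, N\<^sub>1, N\<^sub>2)\<close> and to \<open>(N\<^sub>2, A\<^sub>2, A\<^sub>1)\<close> this gives
  \<open>M\<inverse> \<cdot> diag e \<cdot> A\<^sub>3 = diag f\<close> and \<open>A\<^sub>3 \<cdot> diag e' \<cdot> M\<inverse> = diag f'\<close>, so
  \<open>A\<^sub>3 = (diag e)\<inverse> \<cdot> M \<cdot> diag f\<close>; comparing diagonal entries of the two equations shows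
  that every \<open>f k\<close> has a left and a right inverse, hence is a unit.\<close>

lemma ring_inv_unique:
  fixes u v :: "'a::ring_1"
  assumes "u * v = 1" "v * u = 1"
  shows "ring_inv u = v"
  unfolding ring_inv_def
proof (rule the_equality)
  fix w assume "u * w = 1 \<and> w * u = 1"
  then have "w = w * (u * v)" "w * u = 1" using assms by simp_all
  then show "w = v" by (simp add: mult.assoc[symmetric])
qed (use assms in simp)

lemma
  fixes u :: "'a::ring_1"
  assumes "is_unit u"
  shows ring_inv_right: "u * ring_inv u = 1"
    and ring_inv_left: "ring_inv u * u = 1"
  using assms ring_inv_unique unfolding is_unit_def by blast+

lemma
  fixes u :: "'a::ring_1"
  assumes "is_unit u"
  shows ring_inv_cancel_left: "u * (ring_inv u * w) = w"
    and ring_inv_cancel_left': "ring_inv u * (u * w) = w"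
  by (simp_all add: mult.assoc[symmetric] ring_inv_right ring_inv_left assms)

lemma is_unit_ring_inv: "is_unit u \<Longrightarrow> is_unit (ring_inv u)"
  using ring_inv_right ring_inv_left unfolding is_unit_def by blast

lemma ring_inv_ring_inv: "is_unit u \<Longrightarrow> ring_inv (ring_inv u) = u"
  by (intro ring_inv_unique ring_inv_right ring_inv_left)

lemma is_unit_mult:
  fixes a b :: "'a::ring_1"
  assumes "is_unit a" "is_unit b"
  shows "is_unit (a * b)"
  unfolding is_unit_def
proof (intro exI conjI)
  show "a * b * (ring_inv b * ring_inv a) = 1" "ring_inv b * ring_inv a * (a * b) = 1"
    by (simp_all add: mult.assoc ring_inv_cancel_left ring_inv_cancel_left' ring_inv_right
        ring_inv_left assms)
qed

lemma is_unit_right_factor: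
  fixes a f g :: "'a::ring_1"
  assumes af: "is_unit (a * f)" and ga: "is_unit (g * a)"
  shows "is_unit f"
proof -
  define R where "R = f * ring_inv (a * f)"
  define L where "L = ring_inv (g * a) * g"
  have aR: "a * R = 1" unfolding R_def using ring_inv_right[OF af] by (simp add: mult.assoc)
  have La: "L * a = 1" unfolding L_def using ring_inv_left[OF ga] by (simp add: mult.assoc)
  have "L = R" using aR La by (metis mult.assoc mult_1_left mult_1_right)
  then have a: "is_unit a" using aR La unfolding is_unit_def by blast
  have "f = ring_inv a * (a * f)" by (simp add: ring_inv_cancel_left' a)
  then show ?thesis using is_unit_mult[OF is_unit_ring_inv[OF a] af] by simp
qed

lemma matrix_mult_nth: "(A ** B) $ i $ j = (\<Sum>m\<in>UNIV. A $ i $ m * B $ m $ j)"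
  by (simp add: matrix_matrix_mult_def)

lemma mat_nth: "(mat x :: 'a::zero^'n^'n) $ i $ j = (if i = j then x else 0)"
  by (simp add: mat_def)

lemma
  assumes "invertible A"
  shows matrix_inv_right: "A ** matrix_inv A = mat 1"
    and matrix_inv_left: "matrix_inv A ** A = mat 1"
  using someI_ex[OF assms[unfolded invertible_def]] unfolding matrix_inv_def by auto

definition unit_entries :: "'a::ring_1^'n^'n \<Rightarrow> bool" where
  "unit_entries M \<longleftrightarrow> (\<forall>i j. is_unit (M $ i $ j))"

definition entrywise_inv_transpose :: "'a::ring_1^'n^'n \<Rightarrow> 'a^'n^'n" where
  "entrywise_inv_transpose M = (\<chi> j k. ring_inv (M $ k $ j))"

lemma entrywise_inv_transpose_nth [simp]:
  "entrywise_inv_transpose M $ j $ k = ring_inv (M $ k $ j)"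
  by (simp add: entrywise_inv_transpose_def)

lemma unit_entries_entrywise_inv_transpose:
  "unit_entries M \<Longrightarrow> unit_entries (entrywise_inv_transpose M)"
  by (simp add: unit_entries_def is_unit_ring_inv)

lemma entrywise_inv_transpose_involutive:
  "unit_entries M \<Longrightarrow> entrywise_inv_transpose (entrywise_inv_transpose M) = M"
  by (simp add: unit_entries_def vec_eq_iff ring_inv_ring_inv)

lemma J_eq_Some_iff:
  "J A = Some B \<longleftrightarrow> A ** matrix_inv A = mat 1 \<and> matrix_inv A ** A = mat 1 \<and>
     unit_entries (matrix_inv A) \<and> B = entrywise_inv_transpose (matrix_inv A)"
  by (auto simp: J_def J1_def J2_def unit_entries_def entrywise_inv_transpose_def
      matrix_inv_right matrix_inv_left invertible_def)

definition diag_mat :: "('n \<Rightarrow> 'a::zero) \<Rightarrow> 'a^'n^'n" where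
  "diag_mat e = (\<chi> i j. if i = j then e i else 0)"

lemma diagonal_mat_diag_mat: "diagonal_mat (diag_mat e)"
  by (simp add: diagonal_mat_def diag_mat_def)

lemma diagonal_mat_eq_diag_mat: "diagonal_mat D \<Longrightarrow> D = diag_mat (\<lambda>i. D $ i $ i)"
  by (auto simp: diagonal_mat_def diag_mat_def vec_eq_iff)

lemma matrix_mult_diag_mat_nth: "(A ** diag_mat e) $ i $ j = A $ i $ j * e j"
  by (simp add: matrix_mult_nth diag_mat_def if_distrib cong: if_cong)

lemma diag_mat_matrix_mult_nth: "(diag_mat e ** A) $ i $ j = e i * A $ i $ j"
  by (simp add: matrix_mult_nth diag_mat_def if_distrib if_distribR cong: if_cong)

lemma invertible_diag_mat:
  fixes e :: "'n::finite \<Rightarrow> 'a::ring_1"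
  assumes "\<And>i. is_unit (e i)"
  shows "invertible (diag_mat e)"
  unfolding invertible_def
proof (intro exI conjI)
  show "diag_mat e ** diag_mat (\<lambda>i. ring_inv (e i)) = mat 1"
       "diag_mat (\<lambda>i. ring_inv (e i)) ** diag_mat e = mat 1"
    by (simp_all only: vec_eq_iff diag_mat_matrix_mult_nth)
      (simp_all add: mat_def diag_mat_def ring_inv_right ring_inv_left assms)
qed

lemma UNIV_3_distinct:
  fixes k s t :: 3
  assumes "distinct [k, s, t]"
  shows "UNIV = {k, s, t}"
proof (rule card_subset_eq[symmetric])
  show "card {k, s, t} = card (UNIV :: 3 set)" using assms by simp
qed simp_all

lemma sum_UNIV_3_distinct:
  fixes k s t :: 3
  assumes "distinct [k, s, t]"
  shows "sum f UNIV = f k + f s + f t"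
  using assms by (simp add: UNIV_3_distinct[OF assms] add.assoc)

lemma distinct_3_succ: "distinct [k, k + 1, k + 2 :: 3]"
  using exhaust_3[of k] by auto

lemma zero_line_sums_3_cyclic:
  fixes E :: "3 \<Rightarrow> 3 \<Rightarrow> 'a::ab_group_add"
  assumes diag: "\<And>j. E j j = 0"
    and rows: "\<And>j. (\<Sum>m\<in>UNIV. E j m) = 0"
    and cols: "\<And>m. (\<Sum>j\<in>UNIV. E j m) = 0"
    and "j \<noteq> m"
  shows "E j m = (if m = j + 1 then E 1 2 else - E 1 2)"
proof -
  have R: "E j 1 + E j 2 + E j 3 = 0" and C: "E 1 m + E 2 m + E 3 m = 0" for j m
    using rows[of j] cols[of m] by (simp_all add: sum_3)
  have e13: "E 1 3 = - E 1 2" using R[of 1] diag[of 1] by (simp add: eq_neg_iff_add_eq_0 add.commute)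
  have e23: "E 2 3 = E 1 2" using C[of 3] diag[of 3] e13 by (simp add: add_eq_0_iff2)
  have e21: "E 2 1 = - E 1 2" using R[of 2] diag[of 2] e23 by (simp add: eq_neg_iff_add_eq_0)
  have e31: "E 3 1 = E 1 2" using C[of 1] diag[of 1] e21 by (simp add: add_eq_0_iff2)
  have e32: "E 3 2 = - E 1 2" using C[of 2] diag[of 2] by (simp add: eq_neg_iff_add_eq_0 add.commute)
  show ?thesis
    using exhaust_3[of j] exhaust_3[of m] \<open>j \<noteq> m\<close>
    by (elim disjE) (simp_all add: e13 e23 e21 e31 e32)
qed

lemma
  fixes \<alpha> r \<beta> :: "'n::finite \<Rightarrow> 'a::ring_1"
  assumes "(\<Sum>m\<in>UNIV. \<alpha> m) = 0" "(\<Sum>m\<in>UNIV. \<alpha> m * r m) = 0"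
    and "(\<Sum>j\<in>UNIV. \<beta> j) = 0" "(\<Sum>j\<in>UNIV. r j * \<beta> j) = 0"
  shows row_sum_zero_of_differences: "(\<Sum>m\<in>UNIV. \<alpha> m * (r m - r j) * \<beta> j) = 0"
    and col_sum_zero_of_differences: "(\<Sum>j\<in>UNIV. \<alpha> m * (r m - r j) * \<beta> j) = 0"
proof -
  have "(\<Sum>m\<in>UNIV. \<alpha> m * (r m - r j) * \<beta> j)
      = ((\<Sum>m\<in>UNIV. \<alpha> m * r m) - (\<Sum>m\<in>UNIV. \<alpha> m) * r j) * \<beta> j"
    by (simp add: algebra_simps sum_distrib_right sum_subtractf)
  then show "(\<Sum>m\<in>UNIV. \<alpha> m * (r m - r j) * \<beta> j) = 0" using assms by simp
  have "(\<Sum>j\<in>UNIV. \<alpha> m * (r m - r j) * \<beta> j)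
      = \<alpha> m * (r m * (\<Sum>j\<in>UNIV. \<beta> j) - (\<Sum>j\<in>UNIV. r j * \<beta> j))"
    by (simp add: algebra_simps sum_distrib_left sum_subtractf)
  then show "(\<Sum>j\<in>UNIV. \<alpha> m * (r m - r j) * \<beta> j) = 0" using assms by simp
qed

definition schur_complement :: "'a::ring_1^'n^'n \<Rightarrow> 'n \<Rightarrow> 'n \<Rightarrow> 'n \<Rightarrow> 'a" where
  "schur_complement Z k s t = Z$s$s - Z$s$t * ring_inv (Z$k$t) * Z$k$s"

lemma inverse_entries_3:
  fixes Z X :: "'a::ring_1^3^3"
  assumes "Z ** X = mat 1" "distinct [k, s, t]"
  shows "Z$a$k * X$k$b + Z$a$s * X$s$b + Z$a$t * X$t$b = (if a = b then 1 else 0)"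
  using arg_cong[OF assms(1), of "\<lambda>A. A $ a $ b"]
  by (simp add: matrix_mult_nth mat_nth sum_UNIV_3_distinct[OF assms(2)])

lemma schur_complement_mult_inverse:
  fixes Z X :: "'a::ring_1^3^3"
  assumes ZX: "Z ** X = mat 1" and kst: "distinct [k, s, t]"
    and Zkt: "is_unit (Z$k$t)" and Xkt: "is_unit (X$k$t)"
  shows "schur_complement Z k s t * schur_complement X k s t = 1"
proof -
  note zx = inverse_entries_3[OF ZX kst]
  let ?z = "Z$s$t * ring_inv (Z$k$t)" and ?x = "ring_inv (X$k$t) * X$k$s"
  have "schur_complement Z k s t * schur_complement X k s t
      = (Z$s$k * X$k$s + Z$s$s * X$s$s + Z$s$t * X$t$s)
      - (Z$s$k * X$k$t + Z$s$s * X$s$t + Z$s$t * X$t$t) * ?x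
      - ?z * (Z$k$k * X$k$s + Z$k$s * X$s$s + Z$k$t * X$t$s)
      + ?z * (Z$k$k * X$k$t + Z$k$s * X$s$t + Z$k$t * X$t$t) * ?x"
    unfolding schur_complement_def
    by (simp add: algebra_simps ring_inv_cancel_left[OF Xkt] ring_inv_cancel_left'[OF Zkt]
        ring_inv_right[OF Xkt] ring_inv_left[OF Zkt])
  then show ?thesis using zx[of s s] zx[of s t] zx[of k s] zx[of k t] kst by simp
qed

definition row_ratio_diff :: "'a::ring_1^'n^'n \<Rightarrow> 'n \<Rightarrow> 'n \<Rightarrow> 'n \<Rightarrow> 'n \<Rightarrow> 'a" where
  "row_ratio_diff Z i j s t = Z$i$s * ring_inv (Z$j$s) - Z$i$t * ring_inv (Z$j$t)"

lemma is_unit_row_ratio_diff: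
  fixes X Z :: "'a::ring_1^3^3"
  assumes XZ: "X ** Z = mat 1" and ZX: "Z ** X = mat 1"
    and uX: "unit_entries X" and uZ: "unit_entries Z" and kst: "distinct [k, s, t]"
  shows "is_unit (row_ratio_diff Z s k s t)"
proof -
  have "is_unit (schur_complement Z k s t)"
    using schur_complement_mult_inverse[OF ZX kst] schur_complement_mult_inverse[OF XZ kst]
      uX uZ unfolding is_unit_def unit_entries_def by blast
  moreover have "row_ratio_diff Z s k s t = schur_complement Z k s t * ring_inv (Z$k$s)"
    using uZ unfolding unit_entries_def row_ratio_diff_def schur_complement_def
    by (simp add: algebra_simps ring_inv_cancel_left' ring_inv_right)
  ultimately show ?thesis
    using is_unit_mult is_unit_ring_inv uZ unfolding unit_entries_def by metis
qed

lemma row_ratio_diff_cyclic: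
  fixes X Z P :: "'a::ring_1^3^3" and k :: 3
  assumes XZ: "X ** Z = mat 1" and ZP: "entrywise_inv_transpose Z ** P = mat 1"
    and uZ: "unit_entries Z" and "i \<noteq> j"
  shows "X$k$(k+1) * row_ratio_diff Z (k+1) k (k+1) (k+2) * P$k$k
       = (if i = j + 1 then 1 else -1) * (X$k$i * row_ratio_diff Z i j (k+1) (k+2) * P$j$k)"
proof -
  define s t where "s = k + 1" and "t = k + 2"
  have kst: "k \<noteq> s" "k \<noteq> t" "s \<noteq> t" using distinct_3_succ[of k] unfolding s_def t_def by auto
  note Z_cancel = ring_inv_cancel_left[OF uZ[unfolded unit_entries_def, rule_format]]
    ring_inv_cancel_left'[OF uZ[unfolded unit_entries_def, rule_format]]
    ring_inv_right[OF uZ[unfolded unit_entries_def, rule_format]]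
  define \<alpha> where "\<alpha> m = X$k$m * Z$m$t" for m
  define r where "r m = ring_inv (Z$m$t) * Z$m$s" for m
  define \<beta> where "\<beta> j = ring_inv (Z$j$s) * P$j$k" for j
  define E where "E j m = X$k$m * row_ratio_diff Z m j s t * P$j$k" for j m
  \<comment> \<open>the line sums of \<open>E\<close> vanish by the orthogonality relations of \<open>X Z = 1\<close> and \<open>H Z \<cdot> P = 1\<close>\<close>
  have E_eq: "E j m = \<alpha> m * (r m - r j) * \<beta> j" for j m
    unfolding E_def \<alpha>_def r_def \<beta>_def row_ratio_diff_def by (simp add: algebra_simps Z_cancel)
  have XZ_nth: "(\<Sum>m\<in>UNIV. X$a$m * Z$m$b) = (if a = b then 1 else 0)" for a b
    using arg_cong[OF XZ, of "\<lambda>A. A $ a $ b"] by (simp add: matrix_mult_nth mat_nth)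
  have ZP_nth: "(\<Sum>m\<in>UNIV. ring_inv (Z$m$a) * P$m$b) = (if a = b then 1 else 0)" for a b
    using arg_cong[OF ZP, of "\<lambda>A. A $ a $ b"] by (simp add: matrix_mult_nth mat_nth)
  have sums: "(\<Sum>m\<in>UNIV. \<alpha> m) = 0" "(\<Sum>m\<in>UNIV. \<alpha> m * r m) = 0"
    "(\<Sum>j\<in>UNIV. \<beta> j) = 0" "(\<Sum>j\<in>UNIV. r j * \<beta> j) = 0"
    using XZ_nth[of k t] XZ_nth[of k s] ZP_nth[of s k] ZP_nth[of t k] kst
    by (simp_all add: \<alpha>_def r_def \<beta>_def mult.assoc Z_cancel)
  have E_cyclic: "E j m = (if m = j + 1 then E 1 2 else - E 1 2)" if "j \<noteq> m" for j m
  proof (rule zero_line_sums_3_cyclic[OF _ _ _ that])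
    show "E j j = 0" for j by (simp add: E_eq)
    show "(\<Sum>m\<in>UNIV. E j m) = 0" for j
      unfolding E_eq by (rule row_sum_zero_of_differences[OF sums])
    show "(\<Sum>j\<in>UNIV. E j m) = 0" for m
      unfolding E_eq by (rule col_sum_zero_of_differences[OF sums])
  qed
  have "E k s = (if i = j + 1 then 1 else -1) * E j i"
    using E_cyclic[of k s] E_cyclic[OF \<open>i \<noteq> j\<close>[symmetric]] kst unfolding s_def by auto
  then show ?thesis unfolding E_def s_def t_def .
qed

lemma sum_UNIV_shift:
  fixes a :: "'n::{finite, group_add}"
  shows "(\<Sum>k\<in>UNIV. f (k + a)) = sum f UNIV"
  by (rule sum.reindex_bij_witness[of _ "\<lambda>k. k - a" "\<lambda>k. k + a"]) auto

lemma diagonal_entrywise_inv_transpose_sandwich: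
  fixes X Z P :: "'a::ring_1^3^3"
  assumes XZ: "X ** Z = mat 1" and ZX: "Z ** X = mat 1"
    and ZP: "entrywise_inv_transpose Z ** P = mat 1"
    and uX: "unit_entries X" and uZ: "unit_entries Z" and uP: "unit_entries P"
  obtains e where "\<And>k. is_unit (e k)"
    and "diagonal_mat (entrywise_inv_transpose X ** diag_mat e ** entrywise_inv_transpose P)"
proof
  define e where "e k = X$k$(k+1) * row_ratio_diff Z (k+1) k (k+1) (k+2) * P$k$k" for k
  show "is_unit (e k)" for k
    unfolding e_def using uX uP is_unit_row_ratio_diff[OF XZ ZX uX uZ distinct_3_succ]
    by (intro is_unit_mult) (auto simp: unit_entries_def)
  show "diagonal_mat (entrywise_inv_transpose X ** diag_mat e ** entrywise_inv_transpose P)"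
    unfolding diagonal_mat_def
  proof (intro allI impI)
    fix i j :: 3 assume "i \<noteq> j"
    let ?\<sigma> = "if i = j + 1 then 1 else -1 :: 'a"
    have summand: "ring_inv (X$k$i) * e k * ring_inv (P$j$k) = ?\<sigma> * row_ratio_diff Z i j (k+1) (k+2)"
      for k
      using uX uP unfolding e_def row_ratio_diff_cyclic[OF XZ ZP uZ \<open>i \<noteq> j\<close>] unit_entries_def
      by (simp add: mult.assoc ring_inv_cancel_left' ring_inv_right)
    have "(entrywise_inv_transpose X ** diag_mat e ** entrywise_inv_transpose P) $ i $ j
        = (\<Sum>k\<in>UNIV. ring_inv (X$k$i) * e k * ring_inv (P$j$k))"
      by (simp only: matrix_mult_nth[of "_ ** diag_mat e"] matrix_mult_diag_mat_nth
          entrywise_inv_transpose_nth)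
    also have "\<dots> = ?\<sigma> * (\<Sum>k\<in>UNIV. row_ratio_diff Z i j (k+1) (k+2))"
      by (simp add: summand sum_distrib_left)
    also have "(\<Sum>k\<in>UNIV. row_ratio_diff Z i j (k+1) (k+2)) = 0"
      using sum_UNIV_shift[of "\<lambda>a. Z$i$a * ring_inv (Z$j$a)" 1]
        sum_UNIV_shift[of "\<lambda>a. Z$i$a * ring_inv (Z$j$a)" 2]
      by (simp add: row_ratio_diff_def sum_subtractf)
    finally show "(entrywise_inv_transpose X ** diag_mat e ** entrywise_inv_transpose P) $ i $ j = 0"
      by simp
  qed
qed

lemma diagonal_equivalence_of_sandwiches:
  fixes M N A :: "'a::ring_1^'n^'n"
  assumes MN: "M ** N = mat 1" and NM: "N ** M = mat 1"
    and uA: "\<And>k. is_unit (A$k$k)" and ue: "\<And>k. is_unit (e k)" and ue': "\<And>k. is_unit (e' k)"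
    and left: "diagonal_mat (N ** diag_mat e ** A)"
    and right: "diagonal_mat (A ** diag_mat e' ** N)"
  obtains f where "\<And>k. is_unit (f k)" and "A = matrix_inv (diag_mat e) ** M ** diag_mat f"
proof
  define f where "f k = (N ** diag_mat e ** A) $ k $ k" for k
  define f' where "f' k = (A ** diag_mat e' ** N) $ k $ k" for k
  have L: "M ** diag_mat f = diag_mat e ** A"
  proof -
    have "M ** diag_mat f = M ** (N ** diag_mat e ** A)"
      using diagonal_mat_eq_diag_mat[OF left] unfolding f_def by simp
    then show ?thesis by (simp add: matrix_mul_assoc MN)
  qed
  have R: "diag_mat f' ** M = A ** diag_mat e'"
  proof -
    have "diag_mat f' ** M = (A ** diag_mat e' ** N) ** M"
      using diagonal_mat_eq_diag_mat[OF right] unfolding f'_def by simp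
    then show ?thesis by (simp add: matrix_mul_assoc[symmetric] NM)
  qed
  show "is_unit (f k)" for k
  proof (rule is_unit_right_factor)
    show "is_unit (M$k$k * f k)"
      using arg_cong[OF L, of "\<lambda>B. B $ k $ k"] is_unit_mult[OF ue uA]
      by (simp add: matrix_mult_diag_mat_nth diag_mat_matrix_mult_nth)
    show "is_unit (f' k * M$k$k)"
      using arg_cong[OF R, of "\<lambda>B. B $ k $ k"] is_unit_mult[OF uA ue']
      by (simp add: matrix_mult_diag_mat_nth diag_mat_matrix_mult_nth)
  qed
  have "matrix_inv (diag_mat e) ** M ** diag_mat f = (matrix_inv (diag_mat e) ** diag_mat e) ** A"
    by (simp add: matrix_mul_assoc[symmetric] L)
  then show "A = matrix_inv (diag_mat e) ** M ** diag_mat f"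
    by (simp add: matrix_inv_left invertible_diag_mat ue)
qed

theorem theorem1:
  fixes M :: "'a::ring_1^3^3"
  assumes "J_pow 3 M \<noteq> None"
  shows "\<exists>D1 D2 :: 'a^3^3. diagonal_mat D1 \<and> invertible D1 \<and>
           diagonal_mat D2 \<and> invertible D2 \<and>
           the (J_pow 3 M) = matrix_inv D1 ** M ** D2"
proof -
  obtain A1 A2 A3 where "J M = Some A1" "J A1 = Some A2" "J A2 = Some A3"
    and J3: "the (J_pow 3 M) = A3"
    using assms by (auto simp: numeral_3_eq_3 split: Option.bind_splits)
  then obtain N0 N1 N2 where
    N0: "M ** N0 = mat 1" "N0 ** M = mat 1" "unit_entries N0" "A1 = entrywise_inv_transpose N0" and
    N1: "A1 ** N1 = mat 1" "N1 ** A1 = mat 1" "unit_entries N1" "A2 = entrywise_inv_transpose N1" and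
    N2: "A2 ** N2 = mat 1" "N2 ** A2 = mat 1" "unit_entries N2" "A3 = entrywise_inv_transpose N2"
    unfolding J_eq_Some_iff by blast
  note units = N0(3) N1(3) N2(3) unit_entries_entrywise_inv_transpose[OF N0(3)]
    unit_entries_entrywise_inv_transpose[OF N1(3)]
  note involutive = entrywise_inv_transpose_involutive[OF N0(3)]
    entrywise_inv_transpose_involutive[OF N1(3)]
  obtain e where e: "\<And>k. is_unit (e k)" "diagonal_mat (N0 ** diag_mat e ** A3)"
    using diagonal_entrywise_inv_transpose_sandwich[of A1 N1 N2] N0 N1 N2 units involutive by auto
  obtain e' where e': "\<And>k. is_unit (e' k)" "diagonal_mat (A3 ** diag_mat e' ** N0)"
    using diagonal_entrywise_inv_transpose_sandwich[of N2 A2 A1] N0 N1 N2 units involutive by auto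
  have "\<And>k. is_unit (A3$k$k)"
    using unit_entries_entrywise_inv_transpose[OF N2(3)] N2(4) unfolding unit_entries_def by simp
  then obtain f where "\<And>k. is_unit (f k)" "A3 = matrix_inv (diag_mat e) ** M ** diag_mat f"
    using diagonal_equivalence_of_sandwiches[OF N0(1,2) _ e(1) e'(1) e(2) e'(2)] by blast
  then show ?thesis
    using J3 e(1) diagonal_mat_diag_mat invertible_diag_mat by blast
qed

end
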